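(* Let $(X,d)$ be a sequentially right $K$-complete quasi-pseudometric space and $\varphi:X\to\mathbb{R}\cup\{\infty\}$ a proper, bounded below, nearly lower semicontinuous function. For $x\in X$ let $S(x)=\{y\in X:\varphi(y)+d(y,x)\le\varphi(x)\}$. Then there exists $z\in X$ such that $\varphi(y)=\varphi(z)$ for all $y\in S(z)$. Moreover, for such $z$ and every $y\in S(z)$: (i) $S(y)\subseteq\overline{\{y\}}$, and (ii) $\varphi(y)<\varphi(x)+d(x,y)$ for all $x\in X\setminus S(y)$.
   Context: A quasi-pseudometric on $X$ is $d:X\times X\to[0,\infty)$ with $d(x,x)=0$ and $d(x,z)\le d(x,y)+d(y,z)$ (no symmetry). Topology $\tau_d$: neighbourhood base at $x$ given by $\{y:d(x,y)<r\}$, $r>0$; $x_n\to x$ iff $d(x,x_n)\to0$; $\overline{\{y\}}=\{x:d(x,y)=0\}$. A sequence $(x_n)$ is right $K$-Cauchy if for every $\varepsilon>0$ there is $n_\varepsilon$ with $d(x_{n+k},x_n)<\varepsilon$ for all $n\ge n_\varepsilon$, $k\in\mathbb{N}$; $X$ is sequentially right $K$-complete if every right $K$-Cauchy sequence converges. $\varphi$ proper means $\varphi(x)<\infty$ for some $x$. $\varphi$ is nearly lower semicontinuous if $\varphi(x)\le\liminf_n\varphi(x_n)$ for every sequence with pairwise distinct terms converging to $x$. *)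

theory Defs
  imports "HOL-Analysis.Analysis"
begin

definition quasi_pseudometric :: "('a \<Rightarrow> 'a \<Rightarrow> real) \<Rightarrow> bool" where
  "quasi_pseudometric d \<longleftrightarrow>
     (\<forall>x y. 0 \<le> d x y) \<and> (\<forall>x. d x x = 0) \<and> (\<forall>x y z. d x z \<le> d x y + d y z)"

definition qtop :: "('a \<Rightarrow> 'a \<Rightarrow> real) \<Rightarrow> 'a topology" where
  "qtop d = topology (\<lambda>U. \<forall>x\<in>U. \<exists>r>0. {y. d x y < r} \<subseteq> U)"

definition qconv :: "('a \<Rightarrow> 'a \<Rightarrow> real) \<Rightarrow> (nat \<Rightarrow> 'a) \<Rightarrow> 'a \<Rightarrow> bool" where
  "qconv d xs x \<longleftrightarrow> (\<lambda>n. d x (xs n)) \<longlonglongrightarrow> 0"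

definition right_K_Cauchy :: "('a \<Rightarrow> 'a \<Rightarrow> real) \<Rightarrow> (nat \<Rightarrow> 'a) \<Rightarrow> bool" where
  "right_K_Cauchy d xs \<longleftrightarrow>
     (\<forall>e>0. \<exists>N. \<forall>n\<ge>N. \<forall>k::nat. d (xs (n + k)) (xs n) < e)"

definition seq_right_K_complete :: "('a \<Rightarrow> 'a \<Rightarrow> real) \<Rightarrow> bool" where
  "seq_right_K_complete d \<longleftrightarrow> (\<forall>xs. right_K_Cauchy d xs \<longrightarrow> (\<exists>x. qconv d xs x))"

definition nearly_lsc :: "('a \<Rightarrow> 'a \<Rightarrow> real) \<Rightarrow> ('a \<Rightarrow> ereal) \<Rightarrow> bool" where
  "nearly_lsc d \<phi> \<longleftrightarrow>
     (\<forall>xs x. inj xs \<and> qconv d xs x \<longrightarrow> \<phi> x \<le> liminf (\<lambda>n. \<phi> (xs n)))"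

definition Sset :: "('a \<Rightarrow> 'a \<Rightarrow> real) \<Rightarrow> ('a \<Rightarrow> ereal) \<Rightarrow> 'a \<Rightarrow> 'a set" where
  "Sset d \<phi> x = {y. \<phi> y + ereal (d y x) \<le> \<phi> x}"

end

theory Submission imports Defs begin

text \<open>Ekeland-type argument. If no point z had \<phi> constant on S(z), every S(x) would contain a
  point of strictly smaller value, so one can build a chain x(n+1) \<in> S(x(n)) with \<phi>(x(n))
  strictly decreasing and \<phi>(x(n+1)) within 1/(n+1) of the infimum of \<phi> over S(x(n)). Since
  d(x(n+k), x(n)) \<le> \<phi>(x(n)) - \<phi>(x(n+k)), the chain is right K-Cauchy; its terms are pairwise
  distinct, so near lower semicontinuity applies to its limit z, which lies in every S(x(n)) and
  satisfies \<phi>(z) \<le> inf \<phi>(x(n)). Any y \<in> S(z) lies in every S(x(n)) too, hence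
  \<phi>(y) \<ge> inf \<phi>(x(n)) \<ge> \<phi>(z), so z has no point of strictly smaller value in S(z).
  If \<phi> is constant on S(z) and y \<in> S(z), every w \<in> S(y) \<subseteq> S(z) has \<phi>(w) = \<phi>(y), which forces
  d(w, y) = 0, i.e. w lies in the closure of {y}.\<close>

lemma openin_qtop_iff: "openin (qtop d) U \<longleftrightarrow> (\<forall>x\<in>U. \<exists>r>0. {y. d x y < r} \<subseteq> U)"
proof -
  have "istopology (\<lambda>U. \<forall>x\<in>U. \<exists>r>0. {y. d x y < r} \<subseteq> U)"
    unfolding istopology_def
  proof (intro conjI allI impI)
    fix S T :: "'a set"
    assume S: "\<forall>x\<in>S. \<exists>r>0. {y. d x y < r} \<subseteq> S" and T: "\<forall>x\<in>T. \<exists>r>0. {y. d x y < r} \<subseteq> T"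
    show "\<forall>x\<in>S \<inter> T. \<exists>r>0. {y. d x y < r} \<subseteq> S \<inter> T"
    proof
      fix x assume "x \<in> S \<inter> T"
      then obtain r s where "r > 0" "{y. d x y < r} \<subseteq> S" "s > 0" "{y. d x y < s} \<subseteq> T"
        using S T by blast
      then show "\<exists>r>0. {y. d x y < r} \<subseteq> S \<inter> T"
        by (intro exI[of _ "min r s"]) auto
    qed
  next
    fix K :: "'a set set"
    assume "\<forall>S\<in>K. \<forall>x\<in>S. \<exists>r>0. {y. d x y < r} \<subseteq> S"
    then show "\<forall>x\<in>\<Union>K. \<exists>r>0. {y. d x y < r} \<subseteq> \<Union>K"
      by (meson Union_upper UnionE order_trans)
  qed
  then show ?thesis
    unfolding qtop_def by simp
qed

lemma topspace_qtop: "topspace (qtop d) = UNIV"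
proof -
  have "openin (qtop d) UNIV"
    unfolding openin_qtop_iff by (auto intro: exI[of _ 1])
  then show ?thesis
    by (simp add: topspace_def Sup_upper top_le)
qed

lemma in_closure_of_singleton_qtop:
  assumes "d w y = 0"
  shows "w \<in> qtop d closure_of {y}"
  unfolding closure_of_def topspace_qtop
proof (intro CollectI conjI allI impI)
  fix T assume "w \<in> T \<and> openin (qtop d) T"
  then obtain r where "r > 0" "{v. d w v < r} \<subseteq> T"
    by (auto simp: openin_qtop_iff)
  then show "\<exists>v\<in>{y}. v \<in> T"
    using assms by auto
qed simp

lemma Sset_ereal_iff:
  assumes "\<phi> x = ereal a" and "\<phi> y \<noteq> -\<infinity>"
  shows "y \<in> Sset d \<phi> x \<longleftrightarrow> (\<exists>b. \<phi> y = ereal b \<and> b + d y x \<le> a)"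
  using assms by (cases "\<phi> y") (auto simp: Sset_def)

lemma Sset_refl:
  assumes "quasi_pseudometric d"
  shows "x \<in> Sset d \<phi> x"
proof -
  have "d x x = 0"
    using assms unfolding quasi_pseudometric_def by blast
  then show ?thesis
    by (simp add: Sset_def)
qed

lemma Sset_le:
  assumes "quasi_pseudometric d" and "y \<in> Sset d \<phi> x"
  shows "\<phi> y \<le> \<phi> x"
proof -
  have "0 \<le> d y x"
    using assms(1) unfolding quasi_pseudometric_def by blast
  then have "\<phi> y + ereal 0 \<le> \<phi> y + ereal (d y x)"
    by (intro add_left_mono) simp
  then show ?thesis
    using assms(2) by (simp add: Sset_def)
qed

lemma Sset_infinity:
  assumes "\<phi> x = \<infinity>"
  shows "Sset d \<phi> x = UNIV"
  using assms by (simp add: Sset_def)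

lemma Sset_trans:
  assumes qp: "quasi_pseudometric d" and ninf: "\<forall>x. \<phi> x \<noteq> -\<infinity>"
    and y: "y \<in> Sset d \<phi> x" and w: "w \<in> Sset d \<phi> y"
  shows "w \<in> Sset d \<phi> x"
proof (cases "\<phi> x")
  case (real a)
  obtain b where b: "\<phi> y = ereal b" "b + d y x \<le> a"
    using Sset_ereal_iff[of \<phi> x a y d] real ninf y by blast
  obtain c where c: "\<phi> w = ereal c" "c + d w y \<le> b"
    using Sset_ereal_iff[of \<phi> y b w d] b(1) ninf w by blast
  have "d w x \<le> d w y + d y x"
    using qp unfolding quasi_pseudometric_def by blast
  then have "c + d w x \<le> a"
    using b(2) c(2) by linarith
  then show ?thesis
    using Sset_ereal_iff[of \<phi> x a w d] real ninf c(1) by blast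
qed (use ninf in \<open>auto simp: Sset_infinity\<close>)

lemma Sset_chain:
  assumes "quasi_pseudometric d" and "\<forall>x. \<phi> x \<noteq> -\<infinity>"
    and chain: "\<And>n. xs (Suc n) \<in> Sset d \<phi> (xs n)"
  shows "xs (n + k) \<in> Sset d \<phi> (xs n)"
proof (induction k)
  case 0
  show ?case
    using Sset_refl[OF assms(1)] by simp
next
  case (Suc k)
  show ?case
    using Sset_trans[OF assms(1,2) Suc chain[of "n + k"]] by simp
qed

lemma Sset_dist_eq_0:
  assumes "quasi_pseudometric d" and "w \<in> Sset d \<phi> y" and "\<phi> w = \<phi> y" and "\<bar>\<phi> y\<bar> \<noteq> \<infinity>"
  shows "d w y = 0"
proof -
  obtain b where "\<phi> y = ereal b"
    using assms(4) by (cases "\<phi> y") auto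
  then have "b + d w y \<le> b"
    using assms(2,3) Sset_ereal_iff[of \<phi> y b w d] by auto
  moreover have "0 \<le> d w y"
    using assms(1) unfolding quasi_pseudometric_def by blast
  ultimately show ?thesis
    by linarith
qed

lemma right_K_Cauchy_if_dist_le_decrement:
  fixes f :: "nat \<Rightarrow> real"
  assumes "Cauchy f" and "\<And>n k. d (xs (n + k)) (xs n) \<le> f n - f (n + k)"
  shows "right_K_Cauchy d xs"
  unfolding right_K_Cauchy_def
proof (intro allI impI)
  fix e :: real assume "e > 0"
  then obtain N where N: "\<forall>m\<ge>N. \<forall>n\<ge>N. dist (f m) (f n) < e"
    using assms(1) unfolding Cauchy_def by blast
  have "d (xs (n + k)) (xs n) < e" if "N \<le> n" for n k
  proof -
    have "dist (f n) (f (n + k)) < e"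
      using N that by simp
    then show ?thesis
      using assms(2)[of n k] by (simp add: dist_real_def)
  qed
  then show "\<exists>N. \<forall>n\<ge>N. \<forall>k. d (xs (n + k)) (xs n) < e"
    by blast
qed

lemma qconv_dist_le_decrement:
  fixes f :: "nat \<Rightarrow> real"
  assumes qp: "quasi_pseudometric d" and z: "qconv d xs z" and "f \<longlonglongrightarrow> L"
    and decr: "\<And>n k. d (xs (n + k)) (xs n) \<le> f n - f (n + k)"
  shows "d z (xs n) \<le> f n - L"
proof -
  have "(\<lambda>m. d z (xs m) + (f n - f m)) \<longlonglongrightarrow> 0 + (f n - L)"
    using z assms(3) unfolding qconv_def by (intro tendsto_intros)
  moreover have "d z (xs n) \<le> d z (xs m) + (f n - f m)" if "n \<le> m" for m
  proof -
    obtain k where k: "m = n + k"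
      using \<open>n \<le> m\<close> le_Suc_ex by blast
    have "d z (xs n) \<le> d z (xs m) + d (xs m) (xs n)"
      using qp unfolding quasi_pseudometric_def by blast
    then show ?thesis
      using decr[of n k] unfolding k by linarith
  qed
  ultimately show ?thesis
    by (intro LIMSEQ_le_const[where X = "\<lambda>m. d z (xs m) + (f n - f m)"]) auto
qed

lemma exists_near_INF:
  fixes \<phi> :: "'a \<Rightarrow> ereal"
  assumes "\<forall>x\<in>A. ereal c \<le> \<phi> x" and "y \<in> A" and "\<phi> y < a" and "e > 0"
  shows "\<exists>y\<in>A. \<phi> y < a \<and> \<phi> y < (INF w\<in>A. \<phi> w) + ereal e"
proof -
  define I where "I = (INF w\<in>A. \<phi> w)"
  have "I \<le> \<phi> y" "ereal c \<le> I"
    unfolding I_def using assms(1,2) by (auto intro: INF_lower INF_greatest)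
  then obtain i where "I = ereal i"
    using assms(3) by (cases I) auto
  then have "I < min a (I + ereal e)"
    using \<open>I \<le> \<phi> y\<close> assms(3,4) by auto
  then obtain y' where "y' \<in> A" "\<phi> y' < min a (I + ereal e)"
    unfolding I_def by (meson INF_less_iff)
  then show ?thesis
    unfolding I_def by auto
qed

lemma inj_if_strict_descent:
  fixes \<phi> :: "'a \<Rightarrow> 'b::linorder"
  assumes "\<And>n. \<phi> (xs (Suc n)) < \<phi> (xs n)"
  shows "inj xs"
proof -
  have less: "\<phi> (xs n) < \<phi> (xs m)" if "m < n" for m n
    using that
  proof (induction n)
    case (Suc n)
    then show ?case
      using assms[of n] by (metis less_Suc_eq less_trans)
  qed simp
  show ?thesis
    by (rule injI) (metis less less_irrefl linorder_neqE_nat)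
qed

lemma descending_chain_limit:
  fixes d :: "'a \<Rightarrow> 'a \<Rightarrow> real" and \<phi> :: "'a \<Rightarrow> ereal"
  assumes qp: "quasi_pseudometric d" and compl: "seq_right_K_complete d"
    and ninf: "\<forall>x. \<phi> x \<noteq> -\<infinity>" and bdd: "\<forall>x. ereal c \<le> \<phi> x" and nlsc: "nearly_lsc d \<phi>"
    and chain: "\<And>n. xs (Suc n) \<in> Sset d \<phi> (xs n)"
    and desc: "\<And>n. \<phi> (xs (Suc n)) < \<phi> (xs n)" and fin: "\<phi> (xs 0) < \<infinity>"
  obtains z where "\<And>n. z \<in> Sset d \<phi> (xs n)" and "\<phi> z \<le> (INF n. \<phi> (xs n))"
proof -
  have "decseq (\<lambda>n. \<phi> (xs n))"
    using desc by (intro decseq_SucI less_imp_le)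
  then have "\<phi> (xs n) < \<infinity>" for n
    using decseqD[of "\<lambda>n. \<phi> (xs n)" 0 n] fin by auto
  define f where "f n = real_of_ereal (\<phi> (xs n))" for n
  have f: "\<phi> (xs n) = ereal (f n)" for n
    using \<open>\<phi> (xs n) < \<infinity>\<close> ninf by (cases "\<phi> (xs n)") (auto simp: f_def)
  have f_desc: "f (Suc n) < f n" for n
    using desc[of n] by (simp add: f)
  have "decseq f"
    using f_desc by (intro decseq_SucI less_imp_le)
  moreover have "c \<le> f i" for i
    using spec[OF bdd, of "xs i"] by (simp add: f)
  ultimately obtain L where L: "f \<longlonglongrightarrow> L" "\<forall>i. L \<le> f i"
    using decseq_convergent[of f c] by blast
  have decr: "d (xs (n + k)) (xs n) \<le> f n - f (n + k)" for n k
    using Sset_chain[where xs = xs and n = n and k = k, OF qp ninf chain]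
      Sset_ereal_iff[of \<phi> "xs n" "f n" "xs (n + k)" d] f ninf by fastforce
  obtain z where z: "qconv d xs z"
    using compl right_K_Cauchy_if_dist_le_decrement[where d = d and xs = xs,
        OF LIMSEQ_imp_Cauchy[OF L(1)] decr]
    unfolding seq_right_K_complete_def by blast
  have "\<phi> z \<le> liminf (\<lambda>n. \<phi> (xs n))"
    using nlsc inj_if_strict_descent[where \<phi> = \<phi> and xs = xs, OF desc] z
    unfolding nearly_lsc_def by blast
  also have "liminf (\<lambda>n. \<phi> (xs n)) = ereal L"
    unfolding f by (intro lim_imp_Liminf tendsto_ereal L(1)) simp
  finally have zL: "\<phi> z \<le> ereal L" .
  show thesis
  proof
    obtain b where b: "\<phi> z = ereal b" "b \<le> L"
      using zL ninf by (cases "\<phi> z") auto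
    show "z \<in> Sset d \<phi> (xs n)" for n
      using qconv_dist_le_decrement[where f = f and n = n, OF qp z L(1) decr] b
        Sset_ereal_iff[of \<phi> "xs n" "f n" z d] f ninf by fastforce
    show "\<phi> z \<le> (INF n. \<phi> (xs n))"
    proof (rule order_trans[OF zL], rule INF_greatest)
      show "ereal L \<le> \<phi> (xs n)" for n
        using L(2) by (simp add: f)
    qed
  qed
qed

lemma exists_Sset_stationary:
  fixes d :: "'a \<Rightarrow> 'a \<Rightarrow> real" and \<phi> :: "'a \<Rightarrow> ereal"
  assumes qp: "quasi_pseudometric d" and compl: "seq_right_K_complete d"
    and ninf: "\<forall>x. \<phi> x \<noteq> -\<infinity>" and proper: "\<exists>x. \<phi> x < \<infinity>"
    and bdd: "\<forall>x. ereal c \<le> \<phi> x" and nlsc: "nearly_lsc d \<phi>"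
  shows "\<exists>z. \<forall>y\<in>Sset d \<phi> z. \<phi> y = \<phi> z"
proof (rule ccontr)
  assume not_stationary: "\<nexists>z. \<forall>y\<in>Sset d \<phi> z. \<phi> y = \<phi> z"
  have descent: "\<exists>y\<in>Sset d \<phi> z. \<phi> y < \<phi> z" for z
  proof -
    obtain y where y: "y \<in> Sset d \<phi> z" "\<phi> y \<noteq> \<phi> z"
      using not_stationary by blast
    moreover have "\<phi> y \<le> \<phi> z"
      using Sset_le[OF qp y(1)] .
    ultimately show ?thesis
      by (auto simp: less_le)
  qed
  let ?good = "\<lambda>n x y. y \<in> Sset d \<phi> x \<and> \<phi> y < \<phi> x
    \<and> \<phi> y < (INF w\<in>Sset d \<phi> x. \<phi> w) + ereal (inverse (real (Suc n)))"
  have step: "\<exists>y. \<phi> y < \<infinity> \<and> ?good n x y" if "\<phi> x < \<infinity>" for n x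
  proof -
    obtain y0 where y0: "y0 \<in> Sset d \<phi> x" "\<phi> y0 < \<phi> x"
      using descent by blast
    have lower: "\<forall>w\<in>Sset d \<phi> x. ereal c \<le> \<phi> w"
      using bdd by blast
    obtain y where "?good n x y"
      using exists_near_INF[OF lower y0, of "inverse (real (Suc n))"] by auto
    moreover have "\<phi> y < \<infinity>"
      using calculation that by (meson less_trans)
    ultimately show ?thesis
      by blast
  qed
  have "\<exists>xs. \<forall>n. \<phi> (xs n) < \<infinity> \<and> ?good n (xs n) (xs (Suc n))"
    by (rule dependent_nat_choice) (use proper step in auto)
  then obtain xs where fin: "\<phi> (xs 0) < \<infinity>" and good: "\<And>n. ?good n (xs n) (xs (Suc n))"
    by blast
  obtain z where zS: "\<And>n. z \<in> Sset d \<phi> (xs n)" and z_le: "\<phi> z \<le> (INF n. \<phi> (xs n))"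
    by (rule descending_chain_limit[where xs = xs, OF qp compl ninf bdd nlsc]) (use good fin in auto)
  obtain y where y: "y \<in> Sset d \<phi> z" "\<phi> y < \<phi> z"
    using descent by blast
  have approx: "(INF n. \<phi> (xs n)) \<le> \<phi> y + ereal (inverse (real (Suc n)))" for n
  proof -
    have "(INF n. \<phi> (xs n)) \<le> \<phi> (xs (Suc n))"
      by (rule INF_lower) simp
    also have "\<dots> \<le> (INF w\<in>Sset d \<phi> (xs n). \<phi> w) + ereal (inverse (real (Suc n)))"
      using good[of n] less_imp_le by blast
    also have "\<dots> \<le> \<phi> y + ereal (inverse (real (Suc n)))"
      using Sset_trans[OF qp ninf zS y(1)] by (intro add_right_mono INF_lower)
    finally show ?thesis .
  qed
  have "(INF n. \<phi> (xs n)) \<le> \<phi> y"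
  proof (rule ereal_le_epsilon2)
    fix e :: real assume "e > 0"
    then obtain n where "inverse (real (Suc n)) < e"
      using reals_Archimedean by blast
    then have "\<phi> y + ereal (inverse (real (Suc n))) \<le> \<phi> y + ereal e"
      by (intro add_left_mono) simp
    then show "(INF n. \<phi> (xs n)) \<le> \<phi> y + ereal e"
      using approx[of n] by (rule order_trans[rotated])
  qed
  then show False
    using y(2) z_le by simp
qed

theorem theorem3p2:
  fixes d :: "'a \<Rightarrow> 'a \<Rightarrow> real" and \<phi> :: "'a \<Rightarrow> ereal"
  assumes "quasi_pseudometric d"
    and "seq_right_K_complete d"
    and "\<forall>x. \<phi> x \<noteq> -\<infinity>"
    and "\<exists>x. \<phi> x < \<infinity>"
    and "\<exists>c::real. \<forall>x. ereal c \<le> \<phi> x"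
    and "nearly_lsc d \<phi>"
  shows "(\<exists>z. \<forall>y\<in>Sset d \<phi> z. \<phi> y = \<phi> z)
    \<and> (\<forall>z. (\<forall>y\<in>Sset d \<phi> z. \<phi> y = \<phi> z) \<longrightarrow>
          (\<forall>y\<in>Sset d \<phi> z.
              Sset d \<phi> y \<subseteq> (qtop d) closure_of {y}
            \<and> (\<forall>x. x \<notin> Sset d \<phi> y \<longrightarrow> \<phi> y < \<phi> x + ereal (d x y))))"
proof (intro conjI allI impI ballI subsetI)
  show "\<exists>z. \<forall>y\<in>Sset d \<phi> z. \<phi> y = \<phi> z"
    using exists_Sset_stationary[OF assms(1-4) _ assms(6)] assms(5) by blast
next
  fix z y x
  assume "x \<notin> Sset d \<phi> y"
  then show "\<phi> y < \<phi> x + ereal (d x y)"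
    by (simp add: Sset_def)
next
  fix z y w
  assume stationary: "\<forall>y\<in>Sset d \<phi> z. \<phi> y = \<phi> z"
    and y: "y \<in> Sset d \<phi> z" and w: "w \<in> Sset d \<phi> y"
  have "\<phi> z \<noteq> \<infinity>"
  proof
    assume "\<phi> z = \<infinity>"
    moreover obtain x where "\<phi> x < \<infinity>"
      using assms(4) by blast
    ultimately show False
      using stationary Sset_infinity[of \<phi> z d] by auto
  qed
  then have "\<bar>\<phi> y\<bar> \<noteq> \<infinity>"
    using stationary y assms(3) by auto
  moreover have "\<phi> w = \<phi> y"
    using stationary y Sset_trans[OF assms(1,3) y w] by simp
  ultimately have "d w y = 0"
    using Sset_dist_eq_0[OF assms(1) w] by simp
  then show "w \<in> qtop d closure_of {y}"
    by (rule in_closure_of_singleton_qtop)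
qed

end
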